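(* Let $k\ge 2$, let $\mathcal{F}\subset 2^{[n]}$ be weakly $k$-cross-free, let $i\geq 0$ be an integer and let $\mathcal{F}_i=\{X\in\mathcal{F}: 2^{i}<|X|\leq 2^{i+1}\}$. If $\mathcal{A}\subset\mathcal{F}_i$ is an antichain (with respect to inclusion), then $|\mathcal{A}|\leq (k-1)n/2^{i}$.
   Context: Two sets $A,B\subset[n]$ are weakly crossing if $A\setminus B$, $B\setminus A$ and $A\cap B$ are all non-empty; a family is weakly $k$-cross-free if it does not contain $k$ pairwise weakly crossing sets. *)

theory Defs
  imports Complex_Main
begin

definition weakly_crossing :: "'a set \<Rightarrow> 'a set \<Rightarrow> bool" where
  "weakly_crossing A B \<longleftrightarrow> A - B \<noteq> {} \<and> B - A \<noteq> {} \<and> A \<inter> B \<noteq> {}"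

definition weakly_k_cross_free :: "nat \<Rightarrow> 'a set set \<Rightarrow> bool" where
  "weakly_k_cross_free k F \<longleftrightarrow>
     \<not> (\<exists>S \<subseteq> F. card S = k \<and>
          (\<forall>A\<in>S. \<forall>B\<in>S. A \<noteq> B \<longrightarrow> weakly_crossing A B))"

definition antichain_incl :: "'a set set \<Rightarrow> bool" where
  "antichain_incl A \<longleftrightarrow> (\<forall>X\<in>A. \<forall>Y\<in>A. X \<subseteq> Y \<longrightarrow> X = Y)"

end

theory Submission
  imports Defs
begin

text \<open>Two distinct members of an antichain that share a point weakly cross, so the members of
  an antichain containing a fixed point are pairwise weakly crossing; in a weakly k-cross-free
  family there are therefore at most k - 1 of them. Counting incidences between points of [n]
  and members of the antichain gives a total size of at most (k - 1) n, while every member of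
  \<open>\<F>\<^sub>i\<close> has more than 2^i elements.\<close>

lemma antichain_incl_weakly_crossing:
  assumes "antichain_incl A" "P \<in> A" "Q \<in> A" "P \<noteq> Q" "x \<in> P" "x \<in> Q"
  shows "weakly_crossing P Q"
proof -
  have "\<not> P \<subseteq> Q" "\<not> Q \<subseteq> P"
    using assms(1-4) unfolding antichain_incl_def by metis+
  with assms(5,6) show ?thesis
    unfolding weakly_crossing_def by blast
qed

lemma card_members_containing_le:
  assumes "weakly_k_cross_free k F" "A \<subseteq> F" "antichain_incl A"
  shows "card {X \<in> A. x \<in> X} \<le> k - 1"
proof (rule ccontr)
  assume "\<not> ?thesis"
  then have "k \<le> card {X \<in> A. x \<in> X}" by simp
  then obtain S where S: "S \<subseteq> {X \<in> A. x \<in> X}" "card S = k"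
    by (meson obtain_subset_with_card_n)
  have "\<forall>P\<in>S. \<forall>Q\<in>S. P \<noteq> Q \<longrightarrow> weakly_crossing P Q"
  proof (intro ballI impI)
    fix P Q assume "P \<in> S" "Q \<in> S" "P \<noteq> Q"
    with S(1) show "weakly_crossing P Q"
      by (intro antichain_incl_weakly_crossing[OF assms(3)]) auto
  qed
  moreover have "S \<subseteq> F"
    using S(1) assms(2) by blast
  ultimately show False
    using assms(1) S(2) unfolding weakly_k_cross_free_def by blast
qed

lemma sum_card_eq_sum_card_members_containing:
  assumes "finite A" "finite U" "\<And>X. X \<in> A \<Longrightarrow> X \<subseteq> U"
  shows "(\<Sum>X\<in>A. card X) = (\<Sum>x\<in>U. card {X \<in> A. x \<in> X})"
proof -
  have "(\<Sum>X\<in>A. card X) = (\<Sum>X\<in>A. \<Sum>x\<in>U. if x \<in> X then 1 else 0)"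
  proof (rule sum.cong[OF refl])
    fix X assume "X \<in> A"
    then have "U \<inter> X = X" using assms(3) by blast
    then show "card X = (\<Sum>x\<in>U. if x \<in> X then 1 else 0)"
      using assms(2) by (simp add: sum.If_cases)
  qed
  also have "\<dots> = (\<Sum>x\<in>U. \<Sum>X\<in>A. if x \<in> X then 1 else 0)"
    by (rule sum.swap)
  also have "\<dots> = (\<Sum>x\<in>U. card {X \<in> A. x \<in> X})"
    using assms(1) by (simp add: sum.inter_filter[symmetric])
  finally show ?thesis .
qed

theorem claim1:
  fixes n k i :: nat and F A :: "nat set set"
  assumes "k \<ge> 2"
    and "F \<subseteq> Pow {1..n}"
    and "weakly_k_cross_free k F"
    and "A \<subseteq> {X \<in> F. 2 ^ i < card X \<and> card X \<le> 2 ^ (i + 1)}"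
    and "antichain_incl A"
  shows "real (card A) \<le> (real k - 1) * real n / 2 ^ i"
proof -
  have AF: "A \<subseteq> F" using assms(4) by blast
  have "finite A"
    using AF assms(2) by (simp add: finite_subset[of _ "Pow {1..n}"])
  have "card A * 2 ^ i = (\<Sum>X\<in>A. 2 ^ i)" by simp
  also have "\<dots> \<le> (\<Sum>X\<in>A. card X)"
    using assms(4) by (intro sum_mono) auto
  also have "\<dots> = (\<Sum>x\<in>{1..n}. card {X \<in> A. x \<in> X})"
    using \<open>finite A\<close> AF assms(2) by (intro sum_card_eq_sum_card_members_containing) auto
  also have "\<dots> \<le> (\<Sum>x\<in>{1..n}. k - 1)"
    using card_members_containing_le[OF assms(3) AF assms(5)] by (intro sum_mono)
  finally have "card A * 2 ^ i \<le> n * (k - 1)" by simp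
  then have "real (card A * 2 ^ i) \<le> real (n * (k - 1))"
    by (simp only: of_nat_le_iff)
  then have "real (card A) * 2 ^ i \<le> real n * (real k - 1)"
    using assms(1) by (simp add: of_nat_diff)
  then show ?thesis by (simp add: field_simps)
qed

end
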